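(* Let $G$ be a finite abelian group and $\pi$ a permutation of $G\setminus\{\epsilon\}$ satisfying (i) $\pi^3=\mathrm{id}$, (ii) $\pi(x)^{-1}=\pi^{-1}(x^{-1})$ for all $x\neq\epsilon$, and (iii) $\pi(st)=\pi(t)\,\pi\bigl(\pi(s)^{-1}\pi(t^{-1})\bigr)$ for all non-identity $s,t$ with $s\ne t^{-1}$. Then there is an element $\omega\in G$ such that $s\,\pi(s)\,\pi^{-1}(s)=\omega$ for every $s\in G\setminus\{\epsilon\}$, and $\omega^2=\epsilon$.
   Context: $\epsilon$ denotes the identity element of $G$; $G$ is written multiplicatively. *)

theory Defs
  imports "HOL-Algebra.Algebra"
begin

end

theory Submission
  imports Defs
begin

(* Since pi^3 = id we have pi^-1 = pi^2, so the product in question is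
   f(s) = s pi(s) pi^2(s); it is constant on pi-orbits, and (ii) gives f(s^-1) = f(s)^-1.
   Condition (iii), together with its image under inversion, expresses pi(st) and pi^2(st)
   through A = pi(s) pi^2(t), whence f(st) f(A) = f(s) f(t); comparing this with the same
   identity for (t, s) and for (pi(s), pi^2(t)) gives f(st) = f(A). Solving
   pi(st) = pi(t) pi^2(A)^-1 for A shows f(x) = f(pi(t) pi(x)^-1) for x ~= t, and with
   f(s^-1) = f(s)^-1 this yields f(x) f(t) = 1 for all distinct x, t. Hence f is constant
   as soon as there are three non-identity elements, and then f(s) = f(s^-1) = f(s)^-1.
   The only remaining case, a group of order 3, forces pi = id and f(s) = s^3 = 1. *)

lemma card_2_perm_cube_id_fixes:
  assumes "bij_betw \<pi> A A" and "card A = 2"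
    and "\<And>y. y \<in> A \<Longrightarrow> \<pi> (\<pi> (\<pi> y)) = y" and "x \<in> A"
  shows "\<pi> x = x"
proof (rule ccontr)
  assume ne: "\<pi> x \<noteq> x"
  have "\<pi> x \<in> A" using assms(1,4) by (rule bij_betw_apply)
  with ne assms(2,4) have A_eq: "A = {x, \<pi> x}"
    by (metis card_2_iff doubleton_eq_iff insertE singletonD)
  have "\<pi> (\<pi> x) \<noteq> \<pi> x"
    using assms(1) \<open>\<pi> x \<in> A\<close> assms(4) ne by (metis bij_betw_def inj_onD)
  moreover have "\<pi> (\<pi> x) \<in> A" using assms(1) \<open>\<pi> x \<in> A\<close> by (rule bij_betw_apply)
  ultimately have "\<pi> (\<pi> x) = x" using A_eq by blast
  then show False using assms(3)[OF assms(4)] ne by simp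
qed

locale cubic_cocycle_perm = comm_group G for G (structure) and \<pi> +
  assumes perm: "bij_betw \<pi> (carrier G - {\<one>}) (carrier G - {\<one>})"
    and cube: "x \<in> carrier G - {\<one>} \<Longrightarrow> \<pi> (\<pi> (\<pi> x)) = x"
    and inv_rel: "x \<in> carrier G - {\<one>} \<Longrightarrow>
        inv (\<pi> x) = inv_into (carrier G - {\<one>}) \<pi> (inv x)"
    and cocycle: "\<lbrakk>s \<in> carrier G - {\<one>}; t \<in> carrier G - {\<one>}; s \<noteq> inv t\<rbrakk> \<Longrightarrow>
        \<pi> (s \<otimes> t) = \<pi> t \<otimes> \<pi> (inv (\<pi> s) \<otimes> \<pi> (inv t))"
begin

lemma pi_closed [simp]: "x \<in> carrier G \<Longrightarrow> x \<noteq> \<one> \<Longrightarrow> \<pi> x \<in> carrier G"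
  and pi_ne_one [simp]: "x \<in> carrier G \<Longrightarrow> x \<noteq> \<one> \<Longrightarrow> \<pi> x \<noteq> \<one>"
  using bij_betw_apply[OF perm, of x] by auto

lemma pi_pi_pi [simp]: "x \<in> carrier G \<Longrightarrow> x \<noteq> \<one> \<Longrightarrow> \<pi> (\<pi> (\<pi> x)) = x"
  using cube by blast

lemma pi_eq_iff:
  "\<lbrakk>x \<in> carrier G; x \<noteq> \<one>; y \<in> carrier G; y \<noteq> \<one>\<rbrakk> \<Longrightarrow> \<pi> x = \<pi> y \<longleftrightarrow> x = y"
  by (metis pi_pi_pi)

lemma inv_into_pi_eq: "x \<in> carrier G - {\<one>} \<Longrightarrow> inv_into (carrier G - {\<one>}) \<pi> x = \<pi> (\<pi> x)"
  by (rule inv_into_f_eq[OF bij_betw_imp_inj_on[OF perm]]) auto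

lemma pi_pi_inv: "x \<in> carrier G \<Longrightarrow> x \<noteq> \<one> \<Longrightarrow> \<pi> (\<pi> (inv x)) = inv (\<pi> x)"
  using inv_rel[of x] inv_into_pi_eq[of "inv x"] by simp

lemma pi_inv: "x \<in> carrier G \<Longrightarrow> x \<noteq> \<one> \<Longrightarrow> \<pi> (inv x) = inv (\<pi> (\<pi> x))"
  by (metis pi_pi_inv pi_pi_pi inv_closed inv_eq_1_iff pi_closed pi_ne_one)

lemma pi_mult_pi_pi_ne_one:
  assumes "s \<in> carrier G" "s \<noteq> \<one>" "t \<in> carrier G" "t \<noteq> \<one>" "s \<noteq> inv t"
  shows "\<pi> s \<otimes> \<pi> (\<pi> t) \<noteq> \<one>"
proof
  assume "\<pi> s \<otimes> \<pi> (\<pi> t) = \<one>"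
  then have "inv (\<pi> s) = \<pi> (\<pi> t)"
    using assms by (simp add: inv_equality m_comm)
  then have "\<pi> (\<pi> t) = \<pi> (\<pi> (inv s))"
    using assms by (simp add: pi_pi_inv)
  then have "t = inv s" using assms by (simp add: pi_eq_iff)
  then show False using assms by simp
qed

lemma pi_mult:
  assumes "s \<in> carrier G" "s \<noteq> \<one>" "t \<in> carrier G" "t \<noteq> \<one>" "s \<noteq> inv t"
  shows "\<pi> (s \<otimes> t) = \<pi> t \<otimes> inv (\<pi> (\<pi> (\<pi> s \<otimes> \<pi> (\<pi> t))))"
proof -
  have "inv (\<pi> s) \<otimes> \<pi> (inv t) = inv (\<pi> s \<otimes> \<pi> (\<pi> t))"
    using assms by (simp add: pi_inv inv_mult)
  then show ?thesis
    using assms cocycle[of s t] pi_inv[of "\<pi> s \<otimes> \<pi> (\<pi> t)"] pi_mult_pi_pi_ne_one by simp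
qed

lemma pi_pi_mult:
  assumes "s \<in> carrier G" "s \<noteq> \<one>" "t \<in> carrier G" "t \<noteq> \<one>" "s \<noteq> inv t"
  shows "\<pi> (\<pi> (s \<otimes> t)) = \<pi> (\<pi> s) \<otimes> inv (\<pi> (\<pi> s \<otimes> \<pi> (\<pi> t)))"
proof -
  define A where "A = \<pi> s \<otimes> \<pi> (\<pi> t)"
  have A: "A \<in> carrier G" "A \<noteq> \<one>"
    using assms pi_mult_pi_pi_ne_one unfolding A_def by auto
  have st: "s \<otimes> t \<in> carrier G" "s \<otimes> t \<noteq> \<one>"
    using assms inv_equality by auto
  have "\<pi> (inv t) \<otimes> \<pi> (\<pi> (inv s)) = inv A"
    using assms by (simp add: A_def pi_inv pi_pi_inv inv_mult m_comm)
  then have "\<pi> (inv t \<otimes> inv s) = inv (\<pi> (\<pi> s)) \<otimes> \<pi> A"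
    using assms A pi_mult[of "inv t" "inv s"] by (simp add: pi_inv pi_pi_inv)
  moreover have "inv t \<otimes> inv s = inv (s \<otimes> t)"
    using assms by (simp add: inv_mult m_comm)
  ultimately have "inv (\<pi> (\<pi> (s \<otimes> t))) = inv (\<pi> (\<pi> s)) \<otimes> \<pi> A"
    using st by (simp add: pi_inv)
  then show ?thesis
    using assms A st by (metis A_def inv_inv inv_closed inv_mult pi_closed pi_ne_one)
qed

definition orbit_prod :: "'a \<Rightarrow> 'a" where
  "orbit_prod s = s \<otimes> \<pi> s \<otimes> \<pi> (\<pi> s)"

lemma orbit_prod_closed [simp]: "s \<in> carrier G \<Longrightarrow> s \<noteq> \<one> \<Longrightarrow> orbit_prod s \<in> carrier G"
  by (simp add: orbit_prod_def)

lemma orbit_prod_pi: "s \<in> carrier G \<Longrightarrow> s \<noteq> \<one> \<Longrightarrow> orbit_prod (\<pi> s) = orbit_prod s"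
  by (simp add: orbit_prod_def m_ac)

lemma orbit_prod_inv: "s \<in> carrier G \<Longrightarrow> s \<noteq> \<one> \<Longrightarrow> orbit_prod (inv s) = inv (orbit_prod s)"
  by (simp add: orbit_prod_def pi_inv pi_pi_inv inv_mult m_ac)

lemma orbit_prod_mult:
  assumes "s \<in> carrier G" "s \<noteq> \<one>" "t \<in> carrier G" "t \<noteq> \<one>" "s \<noteq> inv t"
  shows "orbit_prod (s \<otimes> t) \<otimes> orbit_prod (\<pi> s \<otimes> \<pi> (\<pi> t)) = orbit_prod s \<otimes> orbit_prod t"
proof -
  define A where "A = \<pi> s \<otimes> \<pi> (\<pi> t)"
  have A: "A \<in> carrier G" "A \<noteq> \<one>"
    using assms pi_mult_pi_pi_ne_one unfolding A_def by auto
  have "orbit_prod (s \<otimes> t) \<otimes> orbit_prod A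
      = s \<otimes> t \<otimes> (\<pi> t \<otimes> inv (\<pi> (\<pi> A))) \<otimes> (\<pi> (\<pi> s) \<otimes> inv (\<pi> A))
          \<otimes> (A \<otimes> \<pi> A \<otimes> \<pi> (\<pi> A))"
    unfolding orbit_prod_def pi_pi_mult[OF assms] unfolding pi_mult[OF assms] A_def ..
  also have "\<dots> = s \<otimes> t \<otimes> \<pi> t \<otimes> \<pi> (\<pi> s) \<otimes> A"
    using assms A by (simp add: m_ac)
  also have "\<dots> = orbit_prod s \<otimes> orbit_prod t"
    using assms by (simp add: orbit_prod_def A_def m_ac)
  finally show ?thesis unfolding A_def .
qed

lemma orbit_prod_mult_eq:
  assumes "s \<in> carrier G" "s \<noteq> \<one>" "t \<in> carrier G" "t \<noteq> \<one>" "s \<noteq> inv t"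
  shows "orbit_prod (s \<otimes> t) = orbit_prod (\<pi> s \<otimes> \<pi> (\<pi> t))"
proof -
  define A B where "A = \<pi> s \<otimes> \<pi> (\<pi> t)" and "B = \<pi> t \<otimes> \<pi> (\<pi> s)"
  have "t \<noteq> inv s" using assms by auto
  have "A \<noteq> \<one>" "B \<noteq> \<one>"
    using assms \<open>t \<noteq> inv s\<close> pi_mult_pi_pi_ne_one unfolding A_def B_def by auto
  then have "\<pi> s \<noteq> inv (\<pi> (\<pi> t))"
    using assms unfolding A_def by auto
  have "orbit_prod (s \<otimes> t) \<otimes> orbit_prod B = orbit_prod s \<otimes> orbit_prod t"
    using orbit_prod_mult[of t s] assms \<open>t \<noteq> inv s\<close> by (simp add: B_def m_comm)
  also have "\<dots> = orbit_prod A \<otimes> orbit_prod B"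
    using orbit_prod_mult[of "\<pi> s" "\<pi> (\<pi> t)"] assms \<open>\<pi> s \<noteq> inv (\<pi> (\<pi> t))\<close>
    by (simp add: A_def B_def orbit_prod_pi m_comm)
  moreover have "s \<otimes> t \<noteq> \<one>" using assms inv_equality by auto
  ultimately show ?thesis
    using assms \<open>A \<noteq> \<one>\<close> \<open>B \<noteq> \<one>\<close> unfolding A_def B_def by simp
qed

lemma orbit_prod_pi_quotient:
  assumes "x \<in> carrier G" "x \<noteq> \<one>" "t \<in> carrier G" "t \<noteq> \<one>" "x \<noteq> t"
  shows "orbit_prod x = orbit_prod (\<pi> t \<otimes> inv (\<pi> x))"
proof -
  define s where "s = x \<otimes> inv t"
  have x: "x = s \<otimes> t" using assms by (simp add: s_def m_assoc)
  have s: "s \<in> carrier G" "s \<noteq> \<one>" "s \<noteq> inv t"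
    using assms by (auto simp: s_def inv_solve_right')
  define A where "A = \<pi> s \<otimes> \<pi> (\<pi> t)"
  have A: "A \<in> carrier G" "A \<noteq> \<one>"
    using assms s pi_mult_pi_pi_ne_one unfolding A_def by auto
  have "\<pi> x = \<pi> t \<otimes> inv (\<pi> (\<pi> A))"
    using pi_mult[of s t] assms s unfolding x A_def by simp
  then have "\<pi> t \<otimes> inv (\<pi> x) = \<pi> (\<pi> A)"
    using assms A by (simp add: inv_mult_group m_lcomm[of "\<pi> t"])
  then show ?thesis
    using orbit_prod_mult_eq[of s t] orbit_prod_pi assms s A unfolding x A_def by simp
qed

lemma orbit_prod_mult_distinct:
  assumes "x \<in> carrier G" "x \<noteq> \<one>" "t \<in> carrier G" "t \<noteq> \<one>" "x \<noteq> t"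
  shows "orbit_prod x \<otimes> orbit_prod t = \<one>"
proof -
  define y where "y = \<pi> t \<otimes> inv (\<pi> x)"
  have "\<pi> t \<noteq> \<pi> x" using assms pi_eq_iff by blast
  then have y: "y \<in> carrier G" "y \<noteq> \<one>"
    using assms by (auto simp: y_def inv_solve_right')
  have "orbit_prod t = orbit_prod (inv y)"
    using orbit_prod_pi_quotient[of t x] assms by (simp add: y_def inv_mult m_comm)
  also have "\<dots> = inv (orbit_prod x)"
    using orbit_prod_pi_quotient[of x t] assms y by (simp add: orbit_prod_inv y_def)
  finally show ?thesis using assms by simp
qed

lemma orbit_prod_order_3:
  assumes "card (carrier G) = 3" "x \<in> carrier G" "x \<noteq> \<one>"
  shows "orbit_prod x = \<one>"
proof -
  have "card (carrier G - {\<one>}) = 2"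
    using assms(1) by (simp add: card_Diff_singleton)
  then have "\<pi> x = x"
    using card_2_perm_cube_id_fixes[OF perm _ cube] assms(2,3) by blast
  moreover have "x [^] order G = \<one>"
    using assms(2) by (rule pow_order_eq_1)
  ultimately show ?thesis
    using assms by (simp add: orbit_prod_def order_def numeral_3_eq_3 m_assoc)
qed

lemma orbit_prod_const:
  assumes "a \<in> carrier G" "a \<noteq> \<one>" "b \<in> carrier G" "b \<noteq> \<one>"
  shows "orbit_prod a = orbit_prod b"
proof (cases "carrier G \<subseteq> {\<one>, a, b}")
  case True
  show ?thesis
  proof (cases "a = b")
    case False
    have "carrier G = {\<one>, a, b}" using True assms by auto
    with False assms have "card (carrier G) = 3" by simp
    with assms show ?thesis by (simp add: orbit_prod_order_3)
  qed simp
next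
  case False
  then obtain u where u: "u \<in> carrier G" "u \<noteq> \<one>" "u \<noteq> a" "u \<noteq> b" by blast
  then have "inv (orbit_prod u) = orbit_prod a" "inv (orbit_prod u) = orbit_prod b"
    using assms orbit_prod_mult_distinct[of a u] orbit_prod_mult_distinct[of b u]
    by (metis inv_equality orbit_prod_closed)+
  then show ?thesis by simp
qed

lemma orbit_prod_square:
  assumes "s \<in> carrier G" "s \<noteq> \<one>"
  shows "orbit_prod s \<otimes> orbit_prod s = \<one>"
proof -
  have "orbit_prod s = inv (orbit_prod s)"
    using orbit_prod_const[of s "inv s"] assms by (simp add: orbit_prod_inv)
  then show ?thesis using assms by (metis r_inv orbit_prod_closed)
qed

theorem ex_orbit_prod_const:
  "\<exists>\<omega>\<in>carrier G.
     (\<forall>s\<in>carrier G - {\<one>}. s \<otimes> \<pi> s \<otimes> inv_into (carrier G - {\<one>}) \<pi> s = \<omega>)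
     \<and> \<omega> \<otimes> \<omega> = \<one>"
proof (cases "carrier G - {\<one>} = {}")
  case True
  show ?thesis unfolding True by (intro bexI[of _ \<one>] conjI) simp_all
next
  case False
  then obtain a where a: "a \<in> carrier G" "a \<noteq> \<one>" by blast
  have "s \<otimes> \<pi> s \<otimes> inv_into (carrier G - {\<one>}) \<pi> s = orbit_prod a"
    if "s \<in> carrier G - {\<one>}" for s
    using that orbit_prod_const[of s a] a by (simp add: inv_into_pi_eq orbit_prod_def)
  then show ?thesis
    using orbit_prod_closed[OF a] orbit_prod_square[OF a] by blast
qed

end

theorem lemma6p2:
  fixes G (structure) and \<pi> :: "'a \<Rightarrow> 'a"
  assumes "comm_group G" and "finite (carrier G)"
    and perm: "bij_betw \<pi> (carrier G - {\<one>}) (carrier G - {\<one>})"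
    and cube: "\<And>x. x \<in> carrier G - {\<one>} \<Longrightarrow> \<pi> (\<pi> (\<pi> x)) = x"
    and inv_rel: "\<And>x. x \<in> carrier G - {\<one>} \<Longrightarrow>
        inv (\<pi> x) = inv_into (carrier G - {\<one>}) \<pi> (inv x)"
    and cocycle: "\<And>s t. s \<in> carrier G - {\<one>} \<Longrightarrow> t \<in> carrier G - {\<one>} \<Longrightarrow>
        s \<noteq> inv t \<Longrightarrow>
        \<pi> (s \<otimes> t) = \<pi> t \<otimes> \<pi> (inv (\<pi> s) \<otimes> \<pi> (inv t))"
  shows "\<exists>\<omega>\<in>carrier G.
           (\<forall>s\<in>carrier G - {\<one>}. s \<otimes> \<pi> s \<otimes> inv_into (carrier G - {\<one>}) \<pi> s = \<omega>)
           \<and> \<omega> \<otimes> \<omega> = \<one>"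
  by (intro cubic_cocycle_perm.ex_orbit_prod_const cubic_cocycle_perm.intro
      cubic_cocycle_perm_axioms.intro) (fact assms)+

end
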